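(* Let $k\ge2$ and let $\tau(x,y,h,b_1)$ be the formula $\alpha(x)\wedge\alpha(y)\wedge([h,b_1]=e)\wedge\beta(b_1)\wedge\forall v\,\forall w\,\big([v,b_1]=[w,b_1]=e\wedge\gamma(h,v,w,b_1)\rightarrow\exists u\,(\alpha(u)\wedge[v,y]=[w,x][v,[u,v]])\big)$, where $\alpha(x)=\forall y\,([y^{-1}xy,x]=e)$, $\beta(y)=\forall x\,(\alpha(x)\rightarrow y^{-1}xy=x^k)$, and $\gamma(x,y,z,t)$ is a group formula such that for every $b_1\in Ab$ and all $n,l,m\in\mathbb{Z}$, $BS(1,k)\models\gamma(b_1^n,b_1^l,b_1^m,b_1)$ iff $nl=m$. If $a_1\in A$ and $b_1\in Ab$, then for all $u,h\in BS(1,k)$: $BS(1,k)\models\tau(a_1,u,h,b_1)$ if and only if there exists $z\in\mathbb{Z}$ with $u=a_1^z$ and $h=b_1^z$.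
   Context: $BS(1,k)=\langle a,b\mid b^{-1}ab=a^k\rangle$, identified with $\mathbb{Z}[1/k]\rtimes\mathbb{Z}$ (pairs $(y,m)$, $y\in\mathbb{Z}[1/k]=\{zk^i:z,i\in\mathbb{Z}\}$, product $(y_1,m_1)(y_2,m_2)=(y_1+y_2k^{-m_1},m_1+m_2)$), with $a=(1,0)$, $b=(0,1)$; $a^y=(y,0)$. $A=\{a^y: y\in\mathbb{Z}[1/k]\}$ (the normal closure of $a$) and $Ab=\{a^yb:y\in\mathbb{Z}[1/k]\}$. The commutator is $[x,y]=x^{-1}y^{-1}xy$. *)

theory Defs
  imports Complex_Main "HOL-Algebra.Group"
begin

text \<open>The Baumslag--Solitar group BS(1,k) realised as Z[1/k] \<rtimes> Z:
  pairs (y,m) with y in Z[1/k] (a subring of the rationals), with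
  (y1,m1)(y2,m2) = (y1 + y2 k^(-m1), m1 + m2).\<close>

definition Zk :: "int \<Rightarrow> rat set" where
  "Zk k = {of_int z * (of_int k) powi i | z i. True}"

definition BS :: "int \<Rightarrow> (rat \<times> int) monoid" where
  "BS k = \<lparr> carrier = {(y, m). y \<in> Zk k},
            mult = (\<lambda>(y1, m1) (y2, m2). (y1 + y2 * (of_int k) powi (- m1), m1 + m2)),
            one = (0, 0) \<rparr>"

definition bs_a :: "int \<Rightarrow> rat \<times> int" where "bs_a k = (1, 0)"
definition bs_b :: "int \<Rightarrow> rat \<times> int" where "bs_b k = (0, 1)"

text \<open>A = {a^y : y in Z[1/k]} and Ab = {a^y b : y in Z[1/k]}, where a^y = (y,0).\<close>
definition bsA :: "int \<Rightarrow> (rat \<times> int) set" where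
  "bsA k = {(y, 0) | y. y \<in> Zk k}"

definition bsAb :: "int \<Rightarrow> (rat \<times> int) set" where
  "bsAb k = {(y, 0) \<otimes>\<^bsub>BS k\<^esub> bs_b k | y. y \<in> Zk k}"

definition bs_comm :: "int \<Rightarrow> rat \<times> int \<Rightarrow> rat \<times> int \<Rightarrow> rat \<times> int" where
  "bs_comm k x y = inv\<^bsub>BS k\<^esub> x \<otimes>\<^bsub>BS k\<^esub> inv\<^bsub>BS k\<^esub> y \<otimes>\<^bsub>BS k\<^esub> x \<otimes>\<^bsub>BS k\<^esub> y"

definition bs_alpha :: "int \<Rightarrow> rat \<times> int \<Rightarrow> bool" where
  "bs_alpha k x \<longleftrightarrow> (\<forall>y\<in>carrier (BS k).
      bs_comm k (inv\<^bsub>BS k\<^esub> y \<otimes>\<^bsub>BS k\<^esub> x \<otimes>\<^bsub>BS k\<^esub> y) x = \<one>\<^bsub>BS k\<^esub>)"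

definition bs_beta :: "int \<Rightarrow> rat \<times> int \<Rightarrow> bool" where
  "bs_beta k y \<longleftrightarrow> (\<forall>x\<in>carrier (BS k). bs_alpha k x \<longrightarrow>
      inv\<^bsub>BS k\<^esub> y \<otimes>\<^bsub>BS k\<^esub> x \<otimes>\<^bsub>BS k\<^esub> y = x [^]\<^bsub>BS k\<^esub> k)"

definition bs_tau :: "int \<Rightarrow> (rat \<times> int \<Rightarrow> rat \<times> int \<Rightarrow> rat \<times> int \<Rightarrow> rat \<times> int \<Rightarrow> bool)
    \<Rightarrow> rat \<times> int \<Rightarrow> rat \<times> int \<Rightarrow> rat \<times> int \<Rightarrow> rat \<times> int \<Rightarrow> bool" where
  "bs_tau k \<gamma> x y h b1 \<longleftrightarrow>
     bs_alpha k x \<and> bs_alpha k y \<and> bs_comm k h b1 = \<one>\<^bsub>BS k\<^esub> \<and> bs_beta k b1 \<and>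
     (\<forall>v\<in>carrier (BS k). \<forall>w\<in>carrier (BS k).
        bs_comm k v b1 = \<one>\<^bsub>BS k\<^esub> \<and> bs_comm k w b1 = \<one>\<^bsub>BS k\<^esub> \<and> \<gamma> h v w b1 \<longrightarrow>
        (\<exists>u\<in>carrier (BS k). bs_alpha k u \<and>
            bs_comm k v y = bs_comm k w x \<otimes>\<^bsub>BS k\<^esub> bs_comm k v (bs_comm k u v)))"

end

(*
  The elements satisfying alpha are exactly those of A, and the centraliser of b1 = (y, 1)
  is the cyclic group generated by b1. Hence h = b1^n and (v, w) ranges over the pairs
  (b1^l, b1^(n l)). Write a1 = a^c, u = a^d, q = k^l and the witness as a^f. Then the equation
  [v, u] = [w, a1][v, [a^f, v]] reads d (1 - q) = c (1 - q^n) - f (q - 1)^2, and since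
  q^n = 1 + n (q - 1) modulo (q - 1)^2 Z[1/k], it is solvable iff (q - 1) divides n c - d in
  Z[1/k] (for q <> 1). So tau holds iff n c - d is divisible by every k^l - 1, l >= 1, and the
  only such element of Z[1/k] is 0: k^l - 1 is prime to k and eventually exceeds any numerator.
*)

theory Submission
  imports Defs "HOL-Algebra.Elementary_Groups"
begin

lemma BS_carrier_iff [simp]: "(y, m) \<in> carrier (BS k) \<longleftrightarrow> y \<in> Zk k"
  by (simp add: BS_def)

lemma BS_mult [simp]:
  "(y1, m1) \<otimes>\<^bsub>BS k\<^esub> (y2, m2) = (y1 + y2 * of_int k powi (- m1), m1 + m2)"
  by (simp add: BS_def)

lemma BS_one [simp]: "\<one>\<^bsub>BS k\<^esub> = (0, 0)"
  by (simp add: BS_def)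

lemma snd_hom_BS: "snd \<in> hom (BS k) integer_group"
  by (rule homI) (auto simp: BS_def)

lemma (in group) commutator_eq_one_iff:
  assumes "x \<in> carrier G" "y \<in> carrier G"
  shows "inv x \<otimes> inv y \<otimes> x \<otimes> y = \<one> \<longleftrightarrow> x \<otimes> y = y \<otimes> x"
proof -
  have "inv x \<otimes> inv y \<otimes> x \<otimes> y = inv (y \<otimes> x) \<otimes> (x \<otimes> y)"
    using assms by (simp add: inv_mult_group m_assoc)
  also have "\<dots> = \<one> \<longleftrightarrow> x \<otimes> y = y \<otimes> x"
    using assms inv_solve_left'[of \<one> "y \<otimes> x" "x \<otimes> y"] by auto
  finally show ?thesis .
qed

locale baumslag_solitar =
  fixes k :: int
  assumes k_nonzero: "k \<noteq> 0"
begin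

lemma Zk_iff: "x \<in> Zk k \<longleftrightarrow> (\<exists>z N. x = of_int z / of_int k ^ N)"
proof
  assume "x \<in> Zk k"
  then obtain z i where x: "x = of_int z * of_int k powi i"
    unfolding Zk_def by blast
  show "\<exists>z N. x = of_int z / of_int k ^ N"
  proof (cases "i \<ge> 0")
    case True
    then have "x = of_int (z * k ^ nat i) / of_int k ^ 0"
      by (simp add: x power_int_def)
    then show ?thesis by blast
  next
    case False
    then have "x = of_int z / of_int k ^ nat (- i)"
      by (simp add: x power_int_def divide_inverse power_inverse)
    then show ?thesis by blast
  qed
next
  assume "\<exists>z N. x = of_int z / of_int k ^ N"
  then obtain z N where "x = of_int z / of_int k ^ N" by blast
  then have "x = of_int z * of_int k powi (- int N)"
    by (simp add: power_int_minus divide_inverse)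
  then show "x \<in> Zk k"
    unfolding Zk_def by blast
qed

lemma Zk_of_int [simp]: "of_int z \<in> Zk k"
  unfolding Zk_iff by (intro exI[of _ z] exI[of _ 0]) simp

lemma Zk_0 [simp]: "0 \<in> Zk k" and Zk_1 [simp]: "1 \<in> Zk k"
  using Zk_of_int[of 0] Zk_of_int[of 1] by simp_all

lemma Zk_powi [simp]: "of_int k powi i \<in> Zk k"
  unfolding Zk_def by (rule CollectI, rule exI[of _ 1], rule exI[of _ i]) simp

lemma Zk_add [simp]:
  assumes "x \<in> Zk k" "y \<in> Zk k" shows "x + y \<in> Zk k"
proof -
  obtain z1 N1 z2 N2 where "x = of_int z1 / of_int k ^ N1" "y = of_int z2 / of_int k ^ N2"
    using assms Zk_iff by blast
  then have "x + y = of_int (z1 * k ^ N2 + z2 * k ^ N1) / of_int k ^ (N1 + N2)"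
    using k_nonzero by (simp add: add_divide_distrib power_add)
  then show ?thesis using Zk_iff by blast
qed

lemma Zk_mult [simp]:
  assumes "x \<in> Zk k" "y \<in> Zk k" shows "x * y \<in> Zk k"
proof -
  obtain z1 N1 z2 N2 where "x = of_int z1 / of_int k ^ N1" "y = of_int z2 / of_int k ^ N2"
    using assms Zk_iff by blast
  then have "x * y = of_int (z1 * z2) / of_int k ^ (N1 + N2)"
    by (simp add: power_add)
  then show ?thesis using Zk_iff by blast
qed

lemma Zk_uminus [simp]: "x \<in> Zk k \<Longrightarrow> - x \<in> Zk k"
  using Zk_mult[OF Zk_of_int[of "-1"]] by simp

lemma Zk_diff [simp]: "x \<in> Zk k \<Longrightarrow> y \<in> Zk k \<Longrightarrow> x - y \<in> Zk k"
  using Zk_add[OF _ Zk_uminus] by simp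

lemma powi_add: "(of_int k :: rat) powi (m + n) = of_int k powi m * of_int k powi n"
  using k_nonzero by (simp add: power_int_add)

lemma group_BS: "group (BS k)"
proof (rule groupI)
  fix x y assume "x \<in> carrier (BS k)" "y \<in> carrier (BS k)"
  then show "x \<otimes>\<^bsub>BS k\<^esub> y \<in> carrier (BS k)"
    by (cases x, cases y) auto
next
  fix x y z assume "x \<in> carrier (BS k)" "y \<in> carrier (BS k)" "z \<in> carrier (BS k)"
  then show "x \<otimes>\<^bsub>BS k\<^esub> y \<otimes>\<^bsub>BS k\<^esub> z = x \<otimes>\<^bsub>BS k\<^esub> (y \<otimes>\<^bsub>BS k\<^esub> z)"
    by (cases x, cases y, cases z) (simp add: powi_add[symmetric] algebra_simps)
next
  fix x assume "x \<in> carrier (BS k)"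
  then obtain y m where "x = (y, m)" "y \<in> Zk k" by (cases x) auto
  then show "\<exists>x'\<in>carrier (BS k). x' \<otimes>\<^bsub>BS k\<^esub> x = \<one>\<^bsub>BS k\<^esub>"
    using k_nonzero by (intro bexI[of _ "(- y * of_int k powi m, - m)"])
      (auto simp: power_int_minus_mult)
qed auto

sublocale BS: group "BS k"
  by (rule group_BS)

lemma BS_inv [simp]: "y \<in> Zk k \<Longrightarrow> inv\<^bsub>BS k\<^esub> (y, m) = (- y * of_int k powi m, - m)"
  using k_nonzero by (intro BS.inv_equality) (auto simp: power_int_minus_mult)

lemma snd_int_pow: "g \<in> carrier (BS k) \<Longrightarrow> snd (g [^]\<^bsub>BS k\<^esub> (n::int)) = n * snd g"
  using hom_int_pow[OF snd_hom_BS] by simp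

lemma BS_int_pow_A: "y \<in> Zk k \<Longrightarrow> (y, 0) [^]\<^bsub>BS k\<^esub> (z::int) = (of_int z * y, 0)"
proof -
  assume y: "y \<in> Zk k"
  have nat_pow: "(y, 0) [^]\<^bsub>BS k\<^esub> (n::nat) = (of_nat n * y, 0)" for n
    by (induction n) (auto simp: algebra_simps)
  show ?thesis
    using y by (auto simp: int_pow_def2 nat_pow)
qed

lemma BS_conj_A:
  "e \<in> Zk k \<Longrightarrow> inv\<^bsub>BS k\<^esub> (e, l) \<otimes>\<^bsub>BS k\<^esub> (c, 0) \<otimes>\<^bsub>BS k\<^esub> (e, l) = (c * of_int k powi l, 0)"
  using k_nonzero by (simp add: algebra_simps power_int_minus_mult)

lemma bs_comm_eq_one_iff:
  "x \<in> carrier (BS k) \<Longrightarrow> y \<in> carrier (BS k) \<Longrightarrow>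
     bs_comm k x y = \<one>\<^bsub>BS k\<^esub> \<longleftrightarrow> x \<otimes>\<^bsub>BS k\<^esub> y = y \<otimes>\<^bsub>BS k\<^esub> x"
  unfolding bs_comm_def by (rule BS.commutator_eq_one_iff)

lemma bs_comm_A_right:
  "e \<in> Zk k \<Longrightarrow> d \<in> Zk k \<Longrightarrow> bs_comm k (e, l) (d, 0) = (d * (1 - of_int k powi l), 0)"
  unfolding bs_comm_def using k_nonzero by (simp add: algebra_simps power_int_minus_mult)

lemma bs_comm_A_left:
  "e \<in> Zk k \<Longrightarrow> d \<in> Zk k \<Longrightarrow> bs_comm k (d, 0) (e, l) = (d * (of_int k powi l - 1), 0)"
  unfolding bs_comm_def using k_nonzero by (simp add: algebra_simps power_int_minus_mult)

lemma Zk_powi_expansion: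
  assumes "q \<in> Zk k" "inverse q \<in> Zk k" "q \<noteq> 0"
  shows "\<exists>P\<in>Zk k. q powi n = 1 + (q - 1) * (of_int n + (q - 1) * P)"
proof (induction n rule: int_induct[where k = 0])
  case base
  show ?case by (intro bexI[of _ 0]) simp_all
next
  case (step1 i)
  then obtain P where "P \<in> Zk k" and P: "q powi i = 1 + (q - 1) * (of_int i + (q - 1) * P)"
    by blast
  have "q powi (i + 1) = 1 + (q - 1) * (of_int (i + 1) + (q - 1) * (of_int i + q * P))"
    using \<open>q \<noteq> 0\<close> by (simp add: power_int_add P algebra_simps)
  then show ?case
    using \<open>P \<in> Zk k\<close> assms by (intro bexI[of _ "of_int i + q * P"]) simp_all
next
  case (step2 i)
  then obtain P where "P \<in> Zk k" and P: "q powi i = 1 + (q - 1) * (of_int i + (q - 1) * P)"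
    by blast
  have "q powi (i - 1) =
      1 + (q - 1) * (of_int (i - 1) + (q - 1) * (inverse q * (P - of_int (i - 1))))"
    using \<open>q \<noteq> 0\<close> by (simp add: power_int_diff P field_simps)
  then show ?case
    using \<open>P \<in> Zk k\<close> assms by (intro bexI[of _ "inverse q * (P - of_int (i - 1))"]) simp_all
qed

lemma Zk_commutator_equation_iff:
  assumes q: "q \<in> Zk k" "inverse q \<in> Zk k" "q \<noteq> 0" and "c \<in> Zk k" "d \<in> Zk k"
  shows "(\<exists>f\<in>Zk k. d * (1 - q) = c * (1 - q powi n) + f * (q - 1) * (1 - q)) \<longleftrightarrow>
    (\<exists>g\<in>Zk k. (q - 1) * (of_int n * c - d) = (q - 1)^2 * g)"
proof -
  obtain P where "P \<in> Zk k" and P: "q powi n = 1 + (q - 1) * (of_int n + (q - 1) * P)"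
    using Zk_powi_expansion[OF q] by blast
  have "d * (1 - q) - (c * (1 - q powi n) + f * (q - 1) * (1 - q)) =
      (q - 1) * (of_int n * c - d) - (q - 1)^2 * (- f - c * P)" for f
    by (simp add: P algebra_simps power2_eq_square)
  then have key: "d * (1 - q) = c * (1 - q powi n) + f * (q - 1) * (1 - q) \<longleftrightarrow>
      (q - 1) * (of_int n * c - d) = (q - 1)^2 * (- f - c * P)" for f
    by (metis eq_iff_diff_eq_0)
  show ?thesis
  proof
    assume "\<exists>f\<in>Zk k. d * (1 - q) = c * (1 - q powi n) + f * (q - 1) * (1 - q)"
    then show "\<exists>g\<in>Zk k. (q - 1) * (of_int n * c - d) = (q - 1)^2 * g"
      using key \<open>P \<in> Zk k\<close> \<open>c \<in> Zk k\<close> by fastforce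
  next
    assume "\<exists>g\<in>Zk k. (q - 1) * (of_int n * c - d) = (q - 1)^2 * g"
    then obtain g where "g \<in> Zk k" "(q - 1) * (of_int n * c - d) = (q - 1)^2 * g" by blast
    then show "\<exists>f\<in>Zk k. d * (1 - q) = c * (1 - q powi n) + f * (q - 1) * (1 - q)"
      using key[of "- g - c * P"] \<open>P \<in> Zk k\<close> \<open>c \<in> Zk k\<close> by (intro bexI[of _ "- g - c * P"]) auto
  qed
qed

end

lemma bsAb_eq: "bsAb k = {(y, 1) | y. y \<in> Zk k}"
  by (simp add: bsAb_def bs_b_def)

definition tau_equation_solvable ::
    "int \<Rightarrow> rat \<times> int \<Rightarrow> rat \<times> int \<Rightarrow> rat \<times> int \<Rightarrow> rat \<times> int \<Rightarrow> bool" where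
  "tau_equation_solvable k x y v w \<longleftrightarrow> (\<exists>u\<in>carrier (BS k). bs_alpha k u \<and>
     bs_comm k v y = bs_comm k w x \<otimes>\<^bsub>BS k\<^esub> bs_comm k v (bs_comm k u v))"

locale baumslag_solitar_ge2 =
  fixes k :: int
  assumes k_ge_2: "k \<ge> 2"
begin

sublocale baumslag_solitar
  using k_ge_2 by unfold_locales simp

lemma powi_eq_1_iff: "(of_int k :: rat) powi m = 1 \<longleftrightarrow> m = 0"
proof -
  have k: "1 < (of_int k :: rat)" using k_ge_2 by simp
  have "(of_int k :: rat) powi m \<noteq> of_int k powi 0" if "m \<noteq> 0"
    using that power_int_strict_increasing[OF _ k, of m 0]
      power_int_strict_increasing[OF _ k, of 0 m] by (cases "m < 0") auto
  then show ?thesis by auto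
qed

lemma bs_alpha_iff:
  assumes "x \<in> carrier (BS k)"
  shows "bs_alpha k x \<longleftrightarrow> snd x = 0"
proof
  obtain c m where x: "x = (c, m)" "c \<in> Zk k"
    using assms by (cases x) auto
  define t where "t = (of_int k :: rat) powi (- m)"
  assume "bs_alpha k x"
  moreover have "(1, 0) \<in> carrier (BS k)" by simp
  ultimately have "bs_comm k (inv\<^bsub>BS k\<^esub> (1, 0) \<otimes>\<^bsub>BS k\<^esub> x \<otimes>\<^bsub>BS k\<^esub> (1, 0)) x = \<one>\<^bsub>BS k\<^esub>"
    unfolding bs_alpha_def by blast
  moreover have "inv\<^bsub>BS k\<^esub> (1, 0) \<otimes>\<^bsub>BS k\<^esub> x \<otimes>\<^bsub>BS k\<^esub> (1, 0) = (c - 1 + t, m)"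
    by (simp add: x t_def)
  ultimately have "(c - 1 + t, m) \<otimes>\<^bsub>BS k\<^esub> (c, m) = (c, m) \<otimes>\<^bsub>BS k\<^esub> (c - 1 + t, m)"
    using x bs_comm_eq_one_iff t_def by simp
  then have "(t - 1)^2 = 0"
    by (simp add: t_def[symmetric] algebra_simps power2_eq_square)
  then have "(of_int k :: rat) powi (- m) = 1" by (simp add: t_def)
  then show "snd x = 0" by (simp add: powi_eq_1_iff x)
next
  assume "snd x = 0"
  then obtain c where x: "x = (c, 0)" "c \<in> Zk k"
    using assms by (cases x) auto
  have "bs_comm k (inv\<^bsub>BS k\<^esub> y \<otimes>\<^bsub>BS k\<^esub> x \<otimes>\<^bsub>BS k\<^esub> y) x = \<one>\<^bsub>BS k\<^esub>"
    if "y \<in> carrier (BS k)" for y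
    using that x by (cases y) (simp add: BS_conj_A bs_comm_A_right)
  then show "bs_alpha k x" unfolding bs_alpha_def by blast
qed

lemma bex_bs_alpha_iff:
  "(\<exists>u\<in>carrier (BS k). bs_alpha k u \<and> P u) \<longleftrightarrow> (\<exists>f\<in>Zk k. P (f, 0))"
proof
  assume "\<exists>u\<in>carrier (BS k). bs_alpha k u \<and> P u"
  then obtain f m where "(f, m) \<in> carrier (BS k)" "bs_alpha k (f, m)" "P (f, m)"
    by (metis prod.collapse)
  then show "\<exists>f\<in>Zk k. P (f, 0)" by (auto simp: bs_alpha_iff)
next
  assume "\<exists>f\<in>Zk k. P (f, 0)"
  then obtain f where "f \<in> Zk k" "P (f, 0)" by blast
  then show "\<exists>u\<in>carrier (BS k). bs_alpha k u \<and> P u"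
    by (intro bexI[of _ "(f, 0)"]) (auto simp: bs_alpha_iff)
qed

lemma bs_beta_Ab: "y \<in> Zk k \<Longrightarrow> bs_beta k (y, 1)"
  unfolding bs_beta_def
  by (auto simp: bs_alpha_iff BS_conj_A BS_int_pow_A mult.commute)

lemma bs_comm_eq_one_iff_power:
  assumes "y \<in> Zk k" "g \<in> carrier (BS k)"
  shows "bs_comm k g (y, 1) = \<one>\<^bsub>BS k\<^esub> \<longleftrightarrow> (\<exists>n::int. g = (y, 1) [^]\<^bsub>BS k\<^esub> n)"
proof -
  define b where "b = (y, 1::int)"
  have b: "b \<in> carrier (BS k)" using assms b_def by simp
  have pow_commutes: "b [^]\<^bsub>BS k\<^esub> n \<otimes>\<^bsub>BS k\<^esub> b = b \<otimes>\<^bsub>BS k\<^esub> b [^]\<^bsub>BS k\<^esub> n" for n :: int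
    using BS.int_pow_mult[OF b, of n 1] BS.int_pow_mult[OF b, of 1 n] b by (simp add: add.commute)
  have commuting_is_power: "g = b [^]\<^bsub>BS k\<^esub> snd g" if "g \<otimes>\<^bsub>BS k\<^esub> b = b \<otimes>\<^bsub>BS k\<^esub> g"
  proof -
    obtain c1 n where g: "g = (c1, n)" by (cases g)
    define p where "p = b [^]\<^bsub>BS k\<^esub> n"
    obtain c2 where p: "p = (c2, n)"
      using snd_int_pow[OF b, of n] by (cases p) (simp add: p_def b_def)
    have "c1 + y * of_int k powi (- n) = y + c1 * inverse (of_int k)"
      using that by (simp add: g b_def)
    moreover have "c2 + y * of_int k powi (- n) = y + c2 * inverse (of_int k)"
      using pow_commutes[of n] unfolding p_def[symmetric] by (simp add: p b_def)
    ultimately have "(c1 - c2) * (1 - inverse (of_int k)) = 0"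
      by (simp add: algebra_simps)
    moreover have "inverse (of_int k :: rat) \<noteq> 1" using k_ge_2 by simp
    ultimately show ?thesis using g p p_def by simp
  qed
  have "bs_comm k g b = \<one>\<^bsub>BS k\<^esub> \<longleftrightarrow> g \<otimes>\<^bsub>BS k\<^esub> b = b \<otimes>\<^bsub>BS k\<^esub> g"
    using assms(2) b by (rule bs_comm_eq_one_iff)
  also have "\<dots> \<longleftrightarrow> (\<exists>n::int. g = b [^]\<^bsub>BS k\<^esub> n)"
  proof
    assume "g \<otimes>\<^bsub>BS k\<^esub> b = b \<otimes>\<^bsub>BS k\<^esub> g"
    then show "\<exists>n::int. g = b [^]\<^bsub>BS k\<^esub> n" using commuting_is_power by blast
  next
    assume "\<exists>n::int. g = b [^]\<^bsub>BS k\<^esub> n"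
    then show "g \<otimes>\<^bsub>BS k\<^esub> b = b \<otimes>\<^bsub>BS k\<^esub> g" using pow_commutes by blast
  qed
  finally show ?thesis by (simp only: b_def)
qed

lemma Zk_eq_0_if_divisible_by_all:
  assumes "e \<in> Zk k" and dvd: "\<And>l::nat. l \<ge> 1 \<Longrightarrow> \<exists>f\<in>Zk k. e = (of_int k ^ l - 1) * f"
  shows "e = 0"
proof (rule ccontr)
  assume "e \<noteq> 0"
  obtain z N where e: "e = of_int z / of_int k ^ N" using assms Zk_iff by blast
  then have "z \<noteq> 0" using \<open>e \<noteq> 0\<close> by auto
  define l where "l = nat \<bar>z\<bar> + 1"
  have "int l < 2 ^ l" by simp
  also have "\<dots> \<le> k ^ l" using k_ge_2 by (simp add: power_mono)
  finally have big: "\<bar>z\<bar> < k ^ l - 1" by (simp add: l_def)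
  obtain f where "f \<in> Zk k" and f: "e = (of_int k ^ l - 1) * f" using dvd[of l] l_def by auto
  then obtain g M where "f = of_int g / of_int k ^ M"
    using Zk_iff by blast
  with f have "of_int (z * k ^ M) = (of_int ((k ^ l - 1) * (g * k ^ N)) :: rat)"
    using e k_nonzero by (simp add: field_simps)
  then have "(k ^ l - 1) dvd z * k ^ M"
    unfolding of_int_eq_iff by (rule dvdI)
  moreover have "coprime (k ^ l - 1) k"
    using coprime_diff_one_left[of "k ^ l"] l_def by simp
  ultimately have "(k ^ l - 1) dvd z" by (simp add: coprime_dvd_mult_left_iff)
  then show False using dvd_imp_le_int[OF \<open>z \<noteq> 0\<close>] big by fastforce
qed

lemma Zk_eq_0_iff_all_powi_divisible:
  assumes "e \<in> Zk k"
  shows "(\<forall>l. \<exists>g\<in>Zk k. (of_int k powi l - 1) * e = (of_int k powi l - 1)^2 * g) \<longleftrightarrow> e = 0"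
proof
  assume dvd: "\<forall>l. \<exists>g\<in>Zk k. (of_int k powi l - 1) * e = (of_int k powi l - 1)^2 * g"
  have "\<exists>g\<in>Zk k. e = (of_int k ^ l - 1) * g" if "l \<ge> 1" for l :: nat
  proof -
    obtain g where "g \<in> Zk k"
      and "(of_int k ^ l - 1) * e = (of_int k ^ l - 1) * ((of_int k ^ l - 1) * g)"
      using dvd[rule_format, of "int l"] by (auto simp: power2_eq_square)
    moreover have "(of_int k ^ l - 1 :: rat) \<noteq> 0"
      using powi_eq_1_iff[of "int l"] that by simp
    ultimately show ?thesis by auto
  qed
  then show "e = 0" using Zk_eq_0_if_divisible_by_all assms by blast
qed auto

lemma tau_equation_solvable_iff_divisible:
  assumes "e \<in> Zk k" "e' \<in> Zk k" "c \<in> Zk k" "d \<in> Zk k"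
  shows "tau_equation_solvable k (c, 0) (d, 0) (e, l) (e', n * l) \<longleftrightarrow>
    (\<exists>g\<in>Zk k. (of_int k powi l - 1) * (of_int n * c - d) = (of_int k powi l - 1)^2 * g)"
proof -
  define q where "q = (of_int k :: rat) powi l"
  have q: "q \<in> Zk k" "inverse q \<in> Zk k" "q \<noteq> 0"
    using k_nonzero by (simp_all add: q_def power_int_minus[symmetric])
  have "of_int k powi (n * l) = q powi n"
    by (simp add: q_def power_int_mult mult.commute)
  then have "tau_equation_solvable k (c, 0) (d, 0) (e, l) (e', n * l) \<longleftrightarrow>
      (\<exists>f\<in>Zk k. d * (1 - q) = c * (1 - q powi n) + f * (q - 1) * (1 - q))"
    unfolding tau_equation_solvable_def bex_bs_alpha_iff
    using assms by (simp add: bs_comm_A_left bs_comm_A_right q_def)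
  also have "\<dots> \<longleftrightarrow> (\<exists>g\<in>Zk k. (q - 1) * (of_int n * c - d) = (q - 1)^2 * g)"
    using q assms(3,4) by (rule Zk_commutator_equation_iff)
  finally show ?thesis by (simp only: q_def)
qed

lemma tau_clause_iff:
  fixes n :: int
  assumes \<gamma>: "\<forall>n l m :: int. \<gamma> (b [^]\<^bsub>BS k\<^esub> n) (b [^]\<^bsub>BS k\<^esub> l) (b [^]\<^bsub>BS k\<^esub> m) b \<longleftrightarrow> n * l = m"
    and b: "b = (y, 1)" "y \<in> Zk k" and "c \<in> Zk k" "d \<in> Zk k"
  shows "(\<forall>v\<in>carrier (BS k). \<forall>w\<in>carrier (BS k).
      bs_comm k v b = \<one>\<^bsub>BS k\<^esub> \<and> bs_comm k w b = \<one>\<^bsub>BS k\<^esub> \<and> \<gamma> (b [^]\<^bsub>BS k\<^esub> n) v w b \<longrightarrow>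
      tau_equation_solvable k (c, 0) (d, 0) v w) \<longleftrightarrow> d = of_int n * c"
    (is "?clause \<longleftrightarrow> _")
proof -
  have b_carrier: "b \<in> carrier (BS k)" using b by simp
  have centralizer: "bs_comm k g b = \<one>\<^bsub>BS k\<^esub> \<longleftrightarrow> (\<exists>l::int. g = b [^]\<^bsub>BS k\<^esub> l)"
    if "g \<in> carrier (BS k)" for g
    using bs_comm_eq_one_iff_power[OF b(2) that] b(1) by simp
  have power: "b [^]\<^bsub>BS k\<^esub> l = (fst (b [^]\<^bsub>BS k\<^esub> l), l) \<and> fst (b [^]\<^bsub>BS k\<^esub> l) \<in> Zk k"
    for l :: int
    using snd_int_pow[OF b_carrier, of l] BS.int_pow_closed[OF b_carrier, of l] b
    by (metis BS_carrier_iff mult_1_right prod.collapse snd_conv)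
  have "?clause \<longleftrightarrow>
      (\<forall>l. tau_equation_solvable k (c, 0) (d, 0) (b [^]\<^bsub>BS k\<^esub> l) (b [^]\<^bsub>BS k\<^esub> (n * l)))"
  proof
    assume clause: ?clause
    show "\<forall>l. tau_equation_solvable k (c, 0) (d, 0) (b [^]\<^bsub>BS k\<^esub> l) (b [^]\<^bsub>BS k\<^esub> (n * l))"
    proof
      fix l
      have "\<gamma> (b [^]\<^bsub>BS k\<^esub> n) (b [^]\<^bsub>BS k\<^esub> l) (b [^]\<^bsub>BS k\<^esub> (n * l)) b" using \<gamma> by simp
      then show "tau_equation_solvable k (c, 0) (d, 0) (b [^]\<^bsub>BS k\<^esub> l) (b [^]\<^bsub>BS k\<^esub> (n * l))"
        using clause centralizer b_carrier by blast
    qed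
  next
    assume all:
      "\<forall>l. tau_equation_solvable k (c, 0) (d, 0) (b [^]\<^bsub>BS k\<^esub> l) (b [^]\<^bsub>BS k\<^esub> (n * l))"
    show ?clause
    proof (intro ballI impI)
      fix v w
      assume "v \<in> carrier (BS k)" "w \<in> carrier (BS k)"
        and "bs_comm k v b = \<one>\<^bsub>BS k\<^esub> \<and> bs_comm k w b = \<one>\<^bsub>BS k\<^esub> \<and> \<gamma> (b [^]\<^bsub>BS k\<^esub> n) v w b"
      then obtain l m :: int
        where "v = b [^]\<^bsub>BS k\<^esub> l" "w = b [^]\<^bsub>BS k\<^esub> m" "\<gamma> (b [^]\<^bsub>BS k\<^esub> n) v w b"
        using centralizer by blast
      moreover from this have "m = n * l" using \<gamma> by simp
      ultimately show "tau_equation_solvable k (c, 0) (d, 0) v w" using all by simp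
    qed
  qed
  also have "\<dots> \<longleftrightarrow> (\<forall>l. \<exists>g\<in>Zk k.
      (of_int k powi l - 1) * (of_int n * c - d) = (of_int k powi l - 1)^2 * g)"
    using tau_equation_solvable_iff_divisible[OF _ _ assms(4,5)] power by metis
  also have "\<dots> \<longleftrightarrow> d = of_int n * c"
    using Zk_eq_0_iff_all_powi_divisible assms(4,5) by auto
  finally show ?thesis .
qed

lemma bs_tau_iff:
  assumes \<gamma>: "\<forall>n l m :: int. \<gamma> (b [^]\<^bsub>BS k\<^esub> n) (b [^]\<^bsub>BS k\<^esub> l) (b [^]\<^bsub>BS k\<^esub> m) b \<longleftrightarrow> n * l = m"
    and b: "b = (y, 1)" "y \<in> Zk k" and c: "c \<in> Zk k"
    and u: "u \<in> carrier (BS k)" and h: "h \<in> carrier (BS k)"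
  shows "bs_tau k \<gamma> (c, 0) u h b \<longleftrightarrow> (\<exists>n::int. u = (of_int n * c, 0) \<and> h = b [^]\<^bsub>BS k\<^esub> n)"
proof
  assume tau: "bs_tau k \<gamma> (c, 0) u h b"
  then obtain d where u_eq: "u = (d, 0)" and "d \<in> Zk k"
    using u by (cases u) (auto simp: bs_tau_def bs_alpha_iff)
  have "bs_comm k h b = \<one>\<^bsub>BS k\<^esub>" using tau unfolding bs_tau_def by blast
  then obtain n :: int where h_eq: "h = b [^]\<^bsub>BS k\<^esub> n"
    using bs_comm_eq_one_iff_power[OF b(2) h] b(1) by auto
  have "\<forall>v\<in>carrier (BS k). \<forall>w\<in>carrier (BS k).
      bs_comm k v b = \<one>\<^bsub>BS k\<^esub> \<and> bs_comm k w b = \<one>\<^bsub>BS k\<^esub> \<and> \<gamma> h v w b \<longrightarrow>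
      tau_equation_solvable k (c, 0) u v w"
    using tau unfolding bs_tau_def tau_equation_solvable_def by blast
  then have "d = of_int n * c"
    using tau_clause_iff[where \<gamma> = \<gamma> and b = b, OF \<gamma> b c \<open>d \<in> Zk k\<close>]
    unfolding u_eq h_eq by blast
  then show "\<exists>n. u = (of_int n * c, 0) \<and> h = b [^]\<^bsub>BS k\<^esub> n"
    using u_eq h_eq by blast
next
  assume "\<exists>n. u = (of_int n * c, 0) \<and> h = b [^]\<^bsub>BS k\<^esub> n"
  then obtain n where u_eq: "u = (of_int n * c, 0)" and h_eq: "h = b [^]\<^bsub>BS k\<^esub> n" by blast
  have "of_int n * c \<in> Zk k" using c by simp
  moreover have "bs_comm k h b = \<one>\<^bsub>BS k\<^esub>"
    using bs_comm_eq_one_iff_power[OF b(2) h] b(1) h_eq by blast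
  ultimately show "bs_tau k \<gamma> (c, 0) u h b"
    using tau_clause_iff[where \<gamma> = \<gamma> and b = b, OF \<gamma> b c, of "of_int n * c" n] c b
    unfolding bs_tau_def tau_equation_solvable_def u_eq h_eq
    by (auto simp: bs_alpha_iff bs_beta_Ab)
qed

end

theorem corollary4p9:
  fixes k :: int
    and \<gamma> :: "rat \<times> int \<Rightarrow> rat \<times> int \<Rightarrow> rat \<times> int \<Rightarrow> rat \<times> int \<Rightarrow> bool"
    and a1 b1 :: "rat \<times> int"
  assumes "k \<ge> 2"
    and "\<And>b. b \<in> bsAb k \<Longrightarrow> \<forall>n l m :: int.
           \<gamma> (b [^]\<^bsub>BS k\<^esub> n) (b [^]\<^bsub>BS k\<^esub> l) (b [^]\<^bsub>BS k\<^esub> m) b \<longleftrightarrow> n * l = m"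
    and "a1 \<in> bsA k"
    and "b1 \<in> bsAb k"
  shows "\<forall>u\<in>carrier (BS k). \<forall>h\<in>carrier (BS k).
           bs_tau k \<gamma> a1 u h b1 \<longleftrightarrow>
           (\<exists>z :: int. u = a1 [^]\<^bsub>BS k\<^esub> z \<and> h = b1 [^]\<^bsub>BS k\<^esub> z)"
proof -
  interpret baumslag_solitar_ge2 k
    using assms(1) by unfold_locales
  obtain c where a1: "a1 = (c, 0)" "c \<in> Zk k"
    using assms(3) unfolding bsA_def by blast
  obtain y where b1: "b1 = (y, 1)" "y \<in> Zk k"
    using assms(4) unfolding bsAb_eq by blast
  show ?thesis
    using bs_tau_iff[of \<gamma> b1, OF assms(2)[OF assms(4)] b1 a1(2)] by (simp add: a1 BS_int_pow_A)
qed

end
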